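(* Let $(P,F)$ be a convex Fuchsian polyhedron in $\mathbb{H}^3$ with invariant plane $\Pi$, and let $Z$ be a Fuchsian deformation of $(P,F)$, with Fuchsian Killing fields $\vec f$ ($f\in F$) such that $Z(fy)=df(\vec f(y)+Z(y))$ for all $y\in P$. Let $Z_h$ be the horizontal component of $Z$. Then $Z_h$ is equivariant under $F$: $Z_h(fy)=df(\vec f(y)+Z_h(y))$ for all $f\in F$ and $y\in P$.
   Context: A convex Fuchsian polyhedron is a pair $(P,F)$ where $P$ is a convex polyhedral surface in $\mathbb{H}^3$ (boundary of a locally finite intersection of half-spaces) and $F$ is a discrete group of orientation-preserving isometries leaving invariant a totally geodesic plane $\Pi$, acting cocompactly without fixed points on $\Pi$, with $F(P)=P$ and $F$ acting freely on $P$. An infinitesimal isometric deformation of $P$ is a triangulation of the faces of $P$ with no new vertices plus a Killing field of $\mathbb{H}^3$ on each triangle, coinciding on common edges; it gives a vector field $Z$ on $P$. A Fuchsian Killing field is the extension of a Killing field $K$ of $\Pi$ defined by: at $x$ at distance $d$ from $\Pi$, with $p_d$ the orthogonal projection onto $\Pi$ of the equidistant surface at distance $d$ through $x$, its value is $(dp_d)^{-1}(K(p_d(x)))$. A Fuchsian deformation is an infinitesimal isometric deformation $Z$ such that for each $f\in F$ there is a Fuchsian Killing field $\vec f$ with $Z(fy)=df(\vec f(y)+Z(y))$ for all $y\in P$. At $x\in P$ the vertical direction is the tangent direction at $x$ of the geodesic through $x$ orthogonal to $\Pi$; horizontal directions are orthogonal to it, and $Z_h$ is the orthogonal projection of $Z$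 onto the horizontal plane. *)

theory Defs
  imports "HOL-Analysis.Analysis"
begin

text \<open>Hyperboloid model of hyperbolic 3-space in Minkowski space R^{3,1}
  (coordinate 1 is the time coordinate).\<close>

type_synonym vec4 = "real ^ 4"
type_synonym mat4 = "real ^ 4 ^ 4"

definition mink :: "vec4 \<Rightarrow> vec4 \<Rightarrow> real" where
  "mink x y = - (x$1 * y$1) + x$2 * y$2 + x$3 * y$3 + x$4 * y$4"

definition H3 :: "vec4 set" where
  "H3 = {x. mink x x = -1 \<and> x$1 > 0}"

text \<open>Orientation-preserving isometries of H3 = orthochronous Lorentz matrices of det 1;
  the isometry acts by x \<mapsto> M x and its differential is v \<mapsto> M v.\<close>
definition isom_plus :: "mat4 \<Rightarrow> bool" where
  "isom_plus M \<longleftrightarrow> (\<forall>x y. mink (M *v x) (M *v y) = mink x y)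
      \<and> (\<lambda>x. M *v x) ` H3 = H3 \<and> det M = 1"

definition so31 :: "mat4 \<Rightarrow> bool" where
  "so31 A \<longleftrightarrow> (\<forall>x y. mink (A *v x) y + mink x (A *v y) = 0)"

definition killing_H3 :: "(vec4 \<Rightarrow> vec4) \<Rightarrow> bool" where
  "killing_H3 K \<longleftrightarrow> (\<exists>A. so31 A \<and> (\<forall>x\<in>H3. K x = A *v x))"

definition unit_spacelike :: "vec4 \<Rightarrow> bool" where
  "unit_spacelike n \<longleftrightarrow> mink n n = 1"

definition hplane :: "vec4 \<Rightarrow> vec4 set" where
  "hplane n = {x\<in>H3. mink n x = 0}"

text \<open>Killing fields of the plane (restrictions to the plane of Killing fields of H3
  preserving it pointwise-normal, i.e. the isometry Lie algebra of the plane).\<close>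
definition killing_plane :: "vec4 \<Rightarrow> (vec4 \<Rightarrow> vec4) \<Rightarrow> bool" where
  "killing_plane n K \<longleftrightarrow> (\<exists>A. so31 A \<and> A *v n = 0 \<and> (\<forall>y\<in>hplane n. K y = A *v y))"

text \<open>Orthogonal projection onto the plane (defined on all of R^4 by this formula).\<close>
definition proj :: "vec4 \<Rightarrow> vec4 \<Rightarrow> vec4" where
  "proj n x = (1 / sqrt (1 + (mink n x)\<^sup>2)) *\<^sub>R (x - mink n x *\<^sub>R n)"

text \<open>Tangent space at x of the equidistant surface through x.\<close>
definition equidist_tangent :: "vec4 \<Rightarrow> vec4 \<Rightarrow> vec4 set" where
  "equidist_tangent n x = {w. mink x w = 0 \<and> mink n w = 0}"

text \<open>Fuchsian extension: value at x is (dp_d)^{-1}(K(p_d x)), where dp_d is the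
  differential at x of the projection restricted to the equidistant surface.\<close>
definition fuchsian_ext :: "vec4 \<Rightarrow> (vec4 \<Rightarrow> vec4) \<Rightarrow> vec4 \<Rightarrow> vec4" where
  "fuchsian_ext n K x = (THE w. w \<in> equidist_tangent n x \<and>
       frechet_derivative (proj n) (at x) w = K (proj n x))"

definition fuchsian_killing :: "vec4 \<Rightarrow> (vec4 \<Rightarrow> vec4) \<Rightarrow> bool" where
  "fuchsian_killing n V \<longleftrightarrow> (\<exists>K. killing_plane n K \<and> (\<forall>x\<in>H3. V x = fuchsian_ext n K x))"

text \<open>Vertical direction at x: velocity at x of the unit-speed geodesic through x
  orthogonal to the plane, t \<mapsto> cosh t p(x) + sinh t n, passing through x at the
  signed distance d = arsinh (mink n x).\<close>
definition vert :: "vec4 \<Rightarrow> vec4 \<Rightarrow> vec4" where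
  "vert n x = vector_derivative (\<lambda>t. cosh t *\<^sub>R proj n x + sinh t *\<^sub>R n)
                 (at (arsinh (mink n x)))"

definition hproj :: "vec4 \<Rightarrow> vec4 \<Rightarrow> vec4 \<Rightarrow> vec4" where
  "hproj n x v = v - (mink v (vert n x) / mink (vert n x) (vert n x)) *\<^sub>R vert n x"

definition halfspace :: "vec4 \<Rightarrow> vec4 set" where
  "halfspace m = {x\<in>H3. mink m x \<le> 0}"

definition polyhedral_surface :: "vec4 set \<Rightarrow> vec4 set \<Rightarrow> bool" where
  "polyhedral_surface Ms P \<longleftrightarrow>
     (\<forall>m\<in>Ms. unit_spacelike m) \<and>
     (\<forall>x\<in>H3. \<exists>e>0. finite {m\<in>Ms. hplane m \<inter> ball x e \<noteq> {}}) \<and>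
     (let C = H3 \<inter> (\<Inter>m\<in>Ms. halfspace m) in
       P = {x\<in>C. \<forall>e>0. \<exists>y\<in>H3 - C. dist x y < e})"

text \<open>Hyperbolic convex hull (radial projection of the Euclidean hull to H3).\<close>
definition hyp_hull :: "vec4 set \<Rightarrow> vec4 set" where
  "hyp_hull S = H3 \<inter> {t *\<^sub>R y | t y. t > 0 \<and> y \<in> convex hull S}"

definition poly_vertex :: "vec4 set \<Rightarrow> vec4 set \<Rightarrow> vec4 \<Rightarrow> bool" where
  "poly_vertex Ms P x \<longleftrightarrow> x \<in> P \<and>
     \<not> (\<exists>a\<in>H3 \<inter> (\<Inter>m\<in>Ms. halfspace m). \<exists>b\<in>H3 \<inter> (\<Inter>m\<in>Ms. halfspace m).
          a \<noteq> b \<and> x \<in> hyp_hull {a, b} - {a, b})"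

text \<open>Infinitesimal isometric deformation: a triangulation of the faces of P with
  vertices among the vertices of P, and a Killing field on each triangle; Z is the
  induced vector field on P (so the Killing fields agree on common edges).\<close>
definition inf_iso_deformation :: "vec4 set \<Rightarrow> vec4 set \<Rightarrow> (vec4 \<Rightarrow> vec4) \<Rightarrow> bool" where
  "inf_iso_deformation Ms P Z \<longleftrightarrow>
     (\<exists>Tri :: vec4 set set. \<exists>K :: vec4 set \<Rightarrow> vec4 \<Rightarrow> vec4.
        (\<forall>V\<in>Tri. card V = 3 \<and> independent V \<and> (\<forall>v\<in>V. poly_vertex Ms P v)
                  \<and> (\<exists>m\<in>Ms. hyp_hull V \<subseteq> P \<inter> hplane m)) \<and>
        (\<forall>V\<in>Tri. \<forall>V'\<in>Tri. hyp_hull V \<inter> hyp_hull V' = hyp_hull (V \<inter> V')) \<and>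
        (\<Union>V\<in>Tri. hyp_hull V) = P \<and>
        (\<forall>V\<in>Tri. killing_H3 (K V) \<and> (\<forall>x\<in>hyp_hull V. Z x = K V x)))"

definition fuchsian_group :: "vec4 \<Rightarrow> mat4 set \<Rightarrow> bool" where
  "fuchsian_group n F \<longleftrightarrow>
     mat 1 \<in> F \<and> (\<forall>M\<in>F. \<forall>M'\<in>F. M ** M' \<in> F) \<and> (\<forall>M\<in>F. matrix_inv M \<in> F) \<and>
     (\<forall>M\<in>F. isom_plus M) \<and>
     (\<forall>M\<in>F. \<exists>e>0. \<forall>M'\<in>F. dist M' M < e \<longrightarrow> M' = M) \<and>
     (\<forall>M\<in>F. (\<lambda>y. M *v y) ` hplane n = hplane n) \<and>
     (\<forall>M\<in>F. \<forall>y\<in>hplane n. M *v y = y \<longrightarrow> M = mat 1) \<and>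
     (\<exists>Kc. compact Kc \<and> Kc \<subseteq> hplane n \<and> hplane n \<subseteq> (\<Union>M\<in>F. (\<lambda>y. M *v y) ` Kc))"

definition convex_fuchsian_polyhedron :: "vec4 \<Rightarrow> vec4 set \<Rightarrow> vec4 set \<Rightarrow> mat4 set \<Rightarrow> bool" where
  "convex_fuchsian_polyhedron n Ms P F \<longleftrightarrow>
     unit_spacelike n \<and> polyhedral_surface Ms P \<and> fuchsian_group n F \<and>
     (\<forall>M\<in>F. (\<lambda>y. M *v y) ` P = P) \<and>
     (\<forall>M\<in>F. \<forall>y\<in>P. M *v y = y \<longrightarrow> M = mat 1)"

definition fuchsian_deformation ::
  "vec4 \<Rightarrow> vec4 set \<Rightarrow> vec4 set \<Rightarrow> mat4 set \<Rightarrow> (vec4 \<Rightarrow> vec4) \<Rightarrow> (mat4 \<Rightarrow> vec4 \<Rightarrow> vec4) \<Rightarrow> bool" where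
  "fuchsian_deformation n Ms P F Z Fv \<longleftrightarrow>
     inf_iso_deformation Ms P Z \<and>
     (\<forall>M\<in>F. fuchsian_killing n (Fv M) \<and>
        (\<forall>y\<in>P. Z (M *v y) = M *v (Fv M y + Z y)))"

end

theory Submission imports Defs begin

text \<open>The value at y of a Fuchsian Killing field is tangent to the equidistant surface through y,
  i.e. Minkowski-orthogonal to both y and the normal n of the plane. The vertical direction at y
  lies in the span of y and n, so such a vector is horizontal and commutes with the horizontal
  projection. An element M of the group is a Lorentz isometry preserving the plane, hence
  M n = \<plusminus>n (the plane spans the orthogonal complement of n), and therefore M maps the vertical
  line at y to the vertical line at M y and commutes with the horizontal projection. Applying the
  horizontal projection to Z(M y) = M (f(y) + Z(y)) gives the claim.\<close>

lemma mink_commute: "mink x y = mink y x"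
  unfolding mink_def by (simp add: algebra_simps)

lemma mink_add_right: "mink x (y + z) = mink x y + mink x z"
  unfolding mink_def by (simp add: algebra_simps)

lemma mink_add_left: "mink (y + z) x = mink y x + mink z x"
  unfolding mink_def by (simp add: algebra_simps)

lemma mink_diff_right: "mink x (y - z) = mink x y - mink x z"
  unfolding mink_def by (simp add: algebra_simps)

lemma mink_diff_left: "mink (y - z) x = mink y x - mink z x"
  unfolding mink_def by (simp add: algebra_simps)

lemma mink_scaleR_right: "mink x (c *\<^sub>R y) = c * mink x y"
  unfolding mink_def by (simp add: algebra_simps)

lemma mink_scaleR_left: "mink (c *\<^sub>R y) x = c * mink y x"
  unfolding mink_def by (simp add: algebra_simps)

lemma mink_zero_right: "mink x 0 = 0"
  unfolding mink_def by simp

lemma mink_zero_left: "mink 0 x = 0"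
  unfolding mink_def by simp

lemmas mink_simps = mink_add_right mink_add_left mink_diff_right mink_diff_left
  mink_scaleR_right mink_scaleR_left mink_zero_right mink_zero_left

lemma bounded_linear_mink: "bounded_linear (mink n)"
  unfolding mink_def by (auto intro!: bounded_linear_intros)

lemma mink_nondegenerate:
  assumes "\<And>e. mink w e = 0"
  shows "w = 0"
proof -
  define e :: vec4 where "e = (\<chi> i. if i = 1 then - (w$i) else w$i)"
  have "mink w e = (w$1)\<^sup>2 + (w$2)\<^sup>2 + (w$3)\<^sup>2 + (w$4)\<^sup>2"
    unfolding mink_def e_def by (simp add: power2_eq_square)
  then have "(w$1)\<^sup>2 + (w$2)\<^sup>2 + (w$3)\<^sup>2 + (w$4)\<^sup>2 = 0"
    using assms by simp
  then have "w$1 = 0 \<and> w$2 = 0 \<and> w$3 = 0 \<and> w$4 = 0"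
    using zero_le_power2[of "w$1"] zero_le_power2[of "w$2"] zero_le_power2[of "w$3"]
      zero_le_power2[of "w$4"]
    by (metis add_nonneg_nonneg add_nonneg_eq_0_iff power_eq_0_iff)
  then have "w$i = 0" for i
    using exhaust_4[of i] by metis
  then show ?thesis
    by (simp add: vec_eq_iff)
qed

lemma cauchy_schwarz_3:
  fixes a b c x y z :: real
  shows "(a*x + b*y + c*z)\<^sup>2 \<le> (a\<^sup>2 + b\<^sup>2 + c\<^sup>2) * (x\<^sup>2 + y\<^sup>2 + z\<^sup>2)"
proof -
  have "(a\<^sup>2 + b\<^sup>2 + c\<^sup>2) * (x\<^sup>2 + y\<^sup>2 + z\<^sup>2) - (a*x + b*y + c*z)\<^sup>2
      = (a*y - b*x)\<^sup>2 + (a*z - c*x)\<^sup>2 + (b*z - c*y)\<^sup>2"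
    by (simp add: power2_eq_square algebra_simps)
  moreover have "(a*y - b*x)\<^sup>2 + (a*z - c*x)\<^sup>2 + (b*z - c*y)\<^sup>2 \<ge> 0"
    by simp
  ultimately show ?thesis
    by linarith
qed

text \<open>Reverse Cauchy-Schwarz: unit timelike vectors on opposite sheets have positive
  Minkowski product.\<close>
lemma timelike_same_sheet:
  assumes "mink a a = -1" "mink b b = -1" "a$1 > 0" "mink a b \<le> 0"
  shows "b$1 > 0"
proof (rule ccontr)
  assume b_nonpos: "\<not> b$1 > 0"
  let ?A = "(a$2)\<^sup>2 + (a$3)\<^sup>2 + (a$4)\<^sup>2" and ?B = "(b$2)\<^sup>2 + (b$3)\<^sup>2 + (b$4)\<^sup>2"
  let ?S = "a$2 * b$2 + a$3 * b$3 + a$4 * b$4"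
  have a1: "(a$1)\<^sup>2 = 1 + ?A" and b1: "(b$1)\<^sup>2 = 1 + ?B"
    using assms(1,2) unfolding mink_def by (simp_all add: power2_eq_square)
  have "?S\<^sup>2 \<le> ?A * ?B"
    by (rule cauchy_schwarz_3)
  also have "\<dots> < (1 + ?A) * (1 + ?B)"
    by (simp add: algebra_simps add_pos_nonneg)
  also have "\<dots> = (a$1 * - b$1)\<^sup>2"
    by (simp add: a1 b1 power_mult_distrib)
  finally have "?S\<^sup>2 < (a$1 * - b$1)\<^sup>2" .
  moreover have "a$1 * - b$1 \<ge> 0"
    using b_nonpos assms(3) by (simp add: mult_nonneg_nonpos)
  ultimately have "\<bar>?S\<bar> < a$1 * - b$1"
    by (metis power2_abs power_less_imp_less_base)
  then have "mink a b > 0"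
    unfolding mink_def by linarith
  then show False
    using assms(4) by simp
qed

lemma proj_in_hplane:
  assumes n: "mink n n = 1" and y: "y \<in> H3"
  shows "proj n y \<in> hplane n"
proof -
  define d where "d = mink n y"
  define s where "s = sqrt (1 + d\<^sup>2)"
  have yy: "mink y y = -1"
    using y unfolding H3_def by simp
  have s_pos: "s > 0" and s_sq: "s\<^sup>2 = 1 + d\<^sup>2"
    unfolding s_def by (simp_all add: add_pos_nonneg)
  have p: "proj n y = (1/s) *\<^sub>R (y - d *\<^sub>R n)"
    unfolding proj_def s_def d_def ..
  have "mink (y - d *\<^sub>R n) (y - d *\<^sub>R n) = - s\<^sup>2" "mink y (y - d *\<^sub>R n) = - s\<^sup>2"
    using n yy s_sq by (simp_all add: mink_simps mink_commute[of y n] d_def power2_eq_square)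
  then have pp: "mink (proj n y) (proj n y) = -1" and yp: "mink y (proj n y) = - s"
    using s_pos by (simp_all only: p mink_scaleR_left mink_scaleR_right) (simp_all add: power2_eq_square)
  have "mink n (proj n y) = 0"
    using n by (simp add: p mink_simps d_def)
  moreover have "(proj n y)$1 > 0"
    using timelike_same_sheet[of y "proj n y"] yy pp yp y s_pos by (simp add: H3_def)
  ultimately show ?thesis
    using pp by (simp add: hplane_def H3_def)
qed

lemma vert_eq: "vert n x = mink n x *\<^sub>R proj n x + sqrt (1 + (mink n x)\<^sup>2) *\<^sub>R n"
proof -
  have "((\<lambda>t. cosh t *\<^sub>R proj n x + sinh t *\<^sub>R n) has_vector_derivative
      (sinh (arsinh (mink n x)) *\<^sub>R proj n x + cosh (arsinh (mink n x)) *\<^sub>R n))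
      (at (arsinh (mink n x)))"
    by (auto intro!: derivative_eq_intros)
  then have "vert n x = sinh (arsinh (mink n x)) *\<^sub>R proj n x + cosh (arsinh (mink n x)) *\<^sub>R n"
    unfolding vert_def by (rule vector_derivative_at)
  then show ?thesis
    by (simp add: cosh_arsinh_real add.commute)
qed

lemma hproj_add_equidist_tangent:
  assumes "f \<in> equidist_tangent n y"
  shows "hproj n y (f + z) = f + hproj n y z"
proof -
  have "mink f (vert n y) = 0"
    using assms mink_commute[of y f] mink_commute[of n f]
    by (simp add: vert_eq proj_def equidist_tangent_def mink_simps)
  then show ?thesis
    unfolding hproj_def by (simp add: mink_simps algebra_simps)
qed

subsection \<open>Fuchsian Killing fields are tangent to the equidistant surfaces\<close>

lemma frechet_derivative_proj:
  assumes "mink n w = 0"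
  shows "frechet_derivative (proj n) (at y) w = (1 / sqrt (1 + (mink n y)\<^sup>2)) *\<^sub>R w"
proof -
  have mink_deriv: "(mink n has_derivative mink n) (at y)"
    by (rule bounded_linear.has_derivative[OF bounded_linear_mink has_derivative_ident])
  have "((\<lambda>m. 1 / sqrt (1 + m\<^sup>2)) has_real_derivative
      - (mink n y / (sqrt (1 + (mink n y)\<^sup>2) * (1 + (mink n y)\<^sup>2)))) (at (mink n y))"
    using add_pos_nonneg[OF zero_less_one zero_le_power2[of "mink n y"]]
    by (auto intro!: derivative_eq_intros simp: power2_eq_square field_simps)
  \<comment> \<open>the value of c is irrelevant: it is multiplied by mink n h, which vanishes on w\<close>
  then obtain c where c: "((\<lambda>m. 1 / sqrt (1 + m\<^sup>2)) has_real_derivative c) (at (mink n y))"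
    by blast
  have "(proj n has_derivative (\<lambda>h. (1 / sqrt (1 + (mink n y)\<^sup>2)) *\<^sub>R (h - mink n h *\<^sub>R n)
      + (mink n h * c) *\<^sub>R (y - mink n y *\<^sub>R n))) (at y)"
    unfolding proj_def[abs_def]
    using has_derivative_scaleR[OF DERIV_compose_FDERIV[OF c mink_deriv]
        has_derivative_diff[OF has_derivative_ident has_derivative_scaleR_left[OF mink_deriv]]]
    by (simp only: add.commute)
  then show ?thesis
    using assms by (simp add: frechet_derivative_at[symmetric])
qed

text \<open>On vectors tangent to the equidistant surface the differential of the projection is
  scaling by 1/s with s = cosh of the distance, so the preimage of A p is s A p; it is tangent
  because A is skew for the Minkowski form and kills n.\<close>
lemma fuchsian_ext_in_equidist_tangent:
  assumes n: "mink n n = 1" and y: "y \<in> H3" and K: "killing_plane n K"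
  shows "fuchsian_ext n K y \<in> equidist_tangent n y"
proof -
  obtain A where A: "so31 A" "A *v n = 0" "\<forall>z\<in>hplane n. K z = A *v z"
    using K unfolding killing_plane_def by blast
  define d where "d = mink n y"
  define s where "s = sqrt (1 + d\<^sup>2)"
  define p where "p = proj n y"
  have s_pos: "s > 0"
    unfolding s_def by (simp add: add_pos_nonneg)
  have Kp: "K p = A *v p"
    using A(3) proj_in_hplane[OF n y] unfolding p_def by simp
  have "y = s *\<^sub>R p + d *\<^sub>R n"
    using s_pos unfolding p_def proj_def s_def d_def by simp
  moreover have skew: "mink (A *v x) z + mink x (A *v z) = 0" for x z
    using A(1) unfolding so31_def by blast
  ultimately have Ap_tangent: "mink n (A *v p) = 0" "mink y (A *v p) = 0"
    using skew[of n p] skew[of p p] A(2) mink_commute[of "A *v p" p] by (simp_all add: mink_simps)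
  define w0 where "w0 = s *\<^sub>R (A *v p)"
  let ?P = "\<lambda>w. w \<in> equidist_tangent n y \<and> frechet_derivative (proj n) (at y) w = K (proj n y)"
  have dproj: "frechet_derivative (proj n) (at y) w = (1/s) *\<^sub>R w" if "w \<in> equidist_tangent n y" for w
    using frechet_derivative_proj[of n w y] that unfolding equidist_tangent_def s_def d_def by simp
  have "w0 \<in> equidist_tangent n y"
    using Ap_tangent unfolding w0_def equidist_tangent_def by (simp add: mink_simps)
  then have "?P w0"
    using dproj s_pos Kp unfolding w0_def p_def by simp
  moreover have "w = w0" if "?P w" for w
    using that dproj[of w] s_pos Kp unfolding w0_def p_def by auto
  ultimately have "?P (fuchsian_ext n K y)"
    unfolding fuchsian_ext_def by (rule theI)
  then show ?thesis
    by simp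
qed

lemma fuchsian_killing_in_equidist_tangent:
  assumes "mink n n = 1" "y \<in> H3" "fuchsian_killing n V"
  shows "V y \<in> equidist_tangent n y"
  using assms fuchsian_ext_in_equidist_tangent unfolding fuchsian_killing_def by metis

subsection \<open>Isometries preserving the plane\<close>

text \<open>For v orthogonal to n and small t > 0, the normalisation of x0 + t v lies in the plane.\<close>
lemma orthogonal_hplane_imp_orthogonal_normal_complement:
  assumes x0: "x0 \<in> hplane n" and u: "\<And>z. z \<in> hplane n \<Longrightarrow> mink u z = 0"
    and v: "mink n v = 0"
  shows "mink u v = 0"
proof -
  have x0x0: "mink x0 x0 = -1" and x0_pos: "x0$1 > 0" and nx0: "mink n x0 = 0"
    using x0 by (auto simp: hplane_def H3_def)
  define a where "a = mink x0 v"
  define t where "t = 1 / (1 + 2 * \<bar>a\<bar> + \<bar>mink v v\<bar>)"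
  have t: "t > 0" "t \<le> 1" "t * (2 * \<bar>a\<bar> + \<bar>mink v v\<bar>) < 1"
    unfolding t_def by (auto simp: field_simps)
  define x where "x = x0 + t *\<^sub>R v"
  have xx: "mink x x = -1 + 2 * t * a + t * t * mink v v"
    unfolding x_def a_def using x0x0 by (simp add: mink_simps mink_commute[of v x0] algebra_simps)
  have "t * t * mink v v \<le> t * t * \<bar>mink v v\<bar>"
    using t by (simp add: mult_left_mono)
  also have "\<dots> \<le> t * \<bar>mink v v\<bar>"
    using t by (intro mult_right_mono) (auto simp: mult_left_le_one_le)
  finally have "t * t * mink v v \<le> t * \<bar>mink v v\<bar>" .
  moreover have "t * a \<le> t * \<bar>a\<bar>"
    using t by (simp add: mult_left_mono)
  moreover have "2 * t * \<bar>a\<bar> + t * \<bar>mink v v\<bar> < 1"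
    using t by (simp add: algebra_simps)
  ultimately have xx_neg: "mink x x < 0"
    using xx by linarith
  have "t * a \<le> t * (2 * \<bar>a\<bar> + \<bar>mink v v\<bar>)"
    using t by (intro mult_left_mono) auto
  then have "t * a < 1"
    using t by linarith
  then have "mink x0 x < 0"
    unfolding x_def using x0x0 by (simp add: mink_simps a_def)
  define z where "z = (1 / sqrt (- mink x x)) *\<^sub>R x"
  have "sqrt (- mink x x) * sqrt (- mink x x) = - mink x x"
    using xx_neg by simp
  then have zz: "mink z z = -1"
    unfolding z_def using xx_neg by (simp add: mink_simps field_simps)
  have "mink x0 z < 0"
    unfolding z_def using xx_neg \<open>mink x0 x < 0\<close> by (simp add: mink_simps divide_neg_pos)
  moreover have "mink n z = 0"
    unfolding z_def x_def using nx0 v by (simp add: mink_simps)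
  ultimately have "z \<in> hplane n"
    using timelike_same_sheet[of x0 z] x0x0 x0_pos zz by (simp add: hplane_def H3_def)
  then have "mink u z = 0"
    by (rule u)
  then have "mink u x = 0"
    using xx_neg unfolding z_def by (simp add: mink_simps)
  then show ?thesis
    using u[OF x0] t unfolding x_def by (simp add: mink_simps)
qed

lemma isometry_preserving_hplane_normal_eq:
  assumes n: "mink n n = 1" and M: "\<And>x y. mink (M *v x) (M *v y) = mink x y"
    and M_hplane: "(\<lambda>y. M *v y) ` hplane n = hplane n" and x0: "x0 \<in> hplane n"
  shows "M *v n = n \<or> M *v n = - n"
proof -
  define u where "u = M *v n"
  have u_hplane: "mink u z = 0" if "z \<in> hplane n" for z
  proof -
    have "z \<in> (\<lambda>y. M *v y) ` hplane n"
      using that M_hplane by simp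
    then obtain x where "x \<in> hplane n" "z = M *v x"
      by blast
    then show ?thesis
      unfolding u_def using M[of n x] by (simp add: hplane_def)
  qed
  have n_perp: "mink n (e - mink n e *\<^sub>R n) = 0" for e
    using n by (simp add: mink_simps)
  have u_perp: "mink u (e - mink n e *\<^sub>R n) = 0" for e
    using u_hplane n_perp by (rule orthogonal_hplane_imp_orthogonal_normal_complement[OF x0])
  have "mink (u - mink u n *\<^sub>R n) e = 0" for e
    using u_perp[of e] by (simp add: mink_simps mink_commute[of n e] algebra_simps)
  then have "u - mink u n *\<^sub>R n = 0"
    by (rule mink_nondegenerate)
  then obtain k where u_eq: "u = k *\<^sub>R n"
    by (simp only: right_minus_eq)
  have "mink u u = 1"
    unfolding u_def using M n by simp
  then have "k = 1 \<or> k = -1"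
    using n unfolding u_eq by (simp add: mink_simps flip: power2_eq_1_iff power2_eq_square)
  then show ?thesis
    using u_eq unfolding u_def by auto
qed

lemma vert_isometry:
  assumes M: "\<And>x y. mink (M *v x) (M *v y) = mink x y"
    and Mn: "M *v n = \<sigma> *\<^sub>R n" and \<sigma>: "\<sigma> * \<sigma> = 1"
  shows "vert n (M *v y) = \<sigma> *\<^sub>R (M *v vert n y)"
proof -
  have "n = \<sigma> *\<^sub>R (M *v n)"
    using Mn \<sigma> by simp
  then have d: "mink n (M *v y) = \<sigma> * mink n y"
    by (metis M mink_scaleR_left)
  have sq: "(\<sigma> * mink n y)\<^sup>2 = (mink n y)\<^sup>2"
    using \<sigma> by (simp add: power2_eq_square algebra_simps)
  have "M *v y - (\<sigma> * mink n y) *\<^sub>R n = M *v (y - mink n y *\<^sub>R n)"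
    using Mn \<sigma> by (simp add: matrix_vector_mult_diff_distrib matrix_vector_mult_scaleR)
  then have "proj n (M *v y) = M *v proj n y"
    unfolding proj_def d sq by (simp add: matrix_vector_mult_scaleR)
  then show ?thesis
    unfolding vert_eq d sq
    using Mn \<sigma> by (simp add: matrix_vector_right_distrib matrix_vector_mult_scaleR algebra_simps)
qed

lemma hproj_isometry:
  assumes M: "\<And>x y. mink (M *v x) (M *v y) = mink x y"
    and Mn: "M *v n = n \<or> M *v n = - n"
  shows "hproj n (M *v y) (M *v w) = M *v hproj n y w"
proof -
  obtain \<sigma> :: real where \<sigma>: "M *v n = \<sigma> *\<^sub>R n" "\<sigma> * \<sigma> = 1"
    using Mn by (metis mult_1 scaleR_one scaleR_minus1_left mult_minus_left minus_minus)
  define v where "v = vert n y"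
  have V: "vert n (M *v y) = \<sigma> *\<^sub>R (M *v v)"
    unfolding v_def by (rule vert_isometry[OF M \<sigma>])
  have "hproj n (M *v y) (M *v w) = M *v w - ((\<sigma> * mink w v / (\<sigma> * \<sigma> * mink v v)) * \<sigma>) *\<^sub>R (M *v v)"
    unfolding hproj_def V by (simp add: mink_simps M)
  also have "\<dots> = M *v hproj n y w"
    using \<sigma>(2) unfolding hproj_def v_def
    by (simp add: matrix_vector_mult_diff_distrib matrix_vector_mult_scaleR algebra_simps)
  finally show ?thesis .
qed

theorem corollary3:
  fixes n :: vec4 and Ms P :: "vec4 set" and F :: "mat4 set"
    and Z :: "vec4 \<Rightarrow> vec4" and Fv :: "mat4 \<Rightarrow> vec4 \<Rightarrow> vec4"
  assumes "convex_fuchsian_polyhedron n Ms P F"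
    and "fuchsian_deformation n Ms P F Z Fv"
  shows "\<forall>M\<in>F. \<forall>y\<in>P. hproj n (M *v y) (Z (M *v y)) = M *v (Fv M y + hproj n y (Z y))"
proof (intro ballI)
  fix M y assume M: "M \<in> F" and y: "y \<in> P"
  have n: "mink n n = 1" and y_H3: "y \<in> H3" and F: "fuchsian_group n F"
    using assms(1) y unfolding convex_fuchsian_polyhedron_def unit_spacelike_def
      polyhedral_surface_def Let_def by auto
  then have M_isom: "\<And>x y. mink (M *v x) (M *v y) = mink x y"
    and M_hplane: "(\<lambda>y. M *v y) ` hplane n = hplane n"
    using M unfolding fuchsian_group_def isom_plus_def by auto
  have Mn: "M *v n = n \<or> M *v n = - n"
    using isometry_preserving_hplane_normal_eq[OF n M_isom M_hplane proj_in_hplane[OF n y_H3]] .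
  have Z_M: "Z (M *v y) = M *v (Fv M y + Z y)" and "fuchsian_killing n (Fv M)"
    using assms(2) M y unfolding fuchsian_deformation_def by auto
  then have "Fv M y \<in> equidist_tangent n y"
    using fuchsian_killing_in_equidist_tangent n y_H3 by blast
  then show "hproj n (M *v y) (Z (M *v y)) = M *v (Fv M y + hproj n y (Z y))"
    by (simp add: Z_M hproj_isometry[OF M_isom Mn] hproj_add_equidist_tangent)
qed

end
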